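(* Let $m \geq 0$ and $n \geq 1$ be integers and let $c = (c^t; c^b) = (c^t_1, \ldots, c^t_m; c^b_1, \ldots, c^b_n)$ be a stable configuration on $K_{m,n}^0$. For $j \in \{1, \ldots, n\}$, define $k_j := \left|\{ i \in \{1,\ldots,m\} : c^t_i < j \}\right|$, and let $(\tilde{c}^b_1, \ldots, \tilde{c}^b_n)$ be the non-decreasing rearrangement of $(c^b_1, \ldots, c^b_n)$. Then $c$ is stochastically recurrent if and only if $$\text{for all } j \in \{1,\ldots,n\}: \quad \tilde{c}^b_1 + \cdots + \tilde{c}^b_j \geq k_1 + \cdots + k_j.$$ Moreover, if $c$ is stochastically recurrent, then $\mathrm{level}(c) = c^b_1 + \cdots + c^b_n - (k_1 + \cdots + k_n)$.
   Context: $K_{m,n}^0$ is the complete bipartite graph with "top" vertices $v^t_0, v^t_1, \ldots, v^t_m$ and "bottom" vertices $v^b_1, \ldots, v^b_n$, with an edge between every top vertex and every bottom vertex; $v^t_0$ is called the sink. A configuration is a vector $c = (c^t_1, \ldots, c^t_m; c^b_1, \ldots, c^b_n)$ of non-negative integers ($c^*_i$ = number of grains at the non-sink vertex $v^*_i$). A non-sink vertex is stable if its number of grains is less than its degree, i.e. $c^t_i < n$, resp. $c^b_j < m+1$; $c$ is stable if all non-sink vertices are stable. Stochastic sandpile model (SSM) with a fixed parameter $p \in (0,1)$: an unstable vertex topples as follows: for each of its neighbours (for a bottom vertex this includes the sink $v^t_0$), independently (and independently of all previous topplings), with probability $p$ it sends one grain to that neighbour, and otherwise keeps that grain; grains sent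 to the sink disappear. Starting from any configuration and repeatedly toppling unstable vertices, one reaches a (random) stable configuration whose law does not depend on the toppling order. Consider the Markov chain on stable configurations which at each step adds a grain to a non-sink vertex chosen uniformly at random and then stabilises according to the SSM. A stable configuration is stochastically recurrent if it is a recurrent state of this Markov chain (appears infinitely often in its long-time running). The level of a configuration is $\mathrm{level}(c) := \sum_{i=1}^m c^t_i + \sum_{j=1}^n c^b_j - mn$. *)

theory Defs
  imports Complex_Main
begin

text \<open>Configurations on K_{m,n}^0: a pair (ct, cb) of functions, where ct i is the number
of grains on top vertex v^t_i (i in 1..m) and cb j the number on bottom vertex v^b_j (j in 1..n).
The top index 0 is the sink.\<close>

type_synonym config = "(nat \<Rightarrow> nat) \<times> (nat \<Rightarrow> nat)"

definition config_wf :: "nat \<Rightarrow> nat \<Rightarrow> config \<Rightarrow> bool" where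
  "config_wf m n c \<longleftrightarrow> (\<forall>i. i \<notin> {1..m} \<longrightarrow> fst c i = 0) \<and> (\<forall>j. j \<notin> {1..n} \<longrightarrow> snd c j = 0)"

definition stable :: "nat \<Rightarrow> nat \<Rightarrow> config \<Rightarrow> bool" where
  "stable m n c \<longleftrightarrow> (\<forall>i\<in>{1..m}. fst c i < n) \<and> (\<forall>j\<in>{1..n}. snd c j < m + 1)"

text \<open>Probability that a toppling vertex of degree d sends grains exactly along a given set of
S of its edges (each edge independently with probability p).\<close>

definition topple_prob :: "real \<Rightarrow> nat \<Rightarrow> nat \<Rightarrow> real" where
  "topple_prob p d s = p ^ s * (1 - p) ^ (d - s)"

text \<open>One SSM toppling of an unstable non-sink vertex, with the set S of neighbours that
receive a grain; only outcomes of positive probability are allowed. Grains sent to the sink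
(top index 0) disappear.\<close>

inductive ssm_topple :: "real \<Rightarrow> nat \<Rightarrow> nat \<Rightarrow> config \<Rightarrow> config \<Rightarrow> bool"
  for p :: real and m n :: nat where
  top: "\<lbrakk> i \<in> {1..m}; ct i \<ge> n; S \<subseteq> {1..n}; topple_prob p n (card S) > 0 \<rbrakk> \<Longrightarrow>
        ssm_topple p m n (ct, cb)
          (ct(i := ct i - card S), \<lambda>j. cb j + (if j \<in> S then 1 else 0))"
| bot: "\<lbrakk> j \<in> {1..n}; cb j \<ge> m + 1; S \<subseteq> {0..m}; topple_prob p (m + 1) (card S) > 0 \<rbrakk> \<Longrightarrow>
        ssm_topple p m n (ct, cb)
          (\<lambda>i. ct i + (if i \<in> S \<and> i \<noteq> 0 then 1 else 0), cb(j := cb j - card S))"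

definition add_top :: "nat \<Rightarrow> config \<Rightarrow> config" where
  "add_top i c = ((fst c)(i := fst c i + 1), snd c)"

definition add_bot :: "nat \<Rightarrow> config \<Rightarrow> config" where
  "add_bot j c = (fst c, (snd c)(j := snd c j + 1))"

text \<open>Positive-probability transitions of the Markov chain on stable configurations:
add a grain at a non-sink vertex, then stabilise (some finite sequence of topplings of unstable
vertices ending in a stable configuration).\<close>

definition chain_step :: "real \<Rightarrow> nat \<Rightarrow> nat \<Rightarrow> config \<Rightarrow> config \<Rightarrow> bool" where
  "chain_step p m n c d \<longleftrightarrow> stable m n c \<and> stable m n d \<and>
     ((\<exists>i\<in>{1..m}. (ssm_topple p m n)\<^sup>*\<^sup>* (add_top i c) d) \<or>
      (\<exists>j\<in>{1..n}. (ssm_topple p m n)\<^sup>*\<^sup>* (add_bot j c) d))"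

text \<open>Recurrence in the (finite) Markov chain: every state reachable from c can reach c back.\<close>

definition stoch_recurrent :: "real \<Rightarrow> nat \<Rightarrow> nat \<Rightarrow> config \<Rightarrow> bool" where
  "stoch_recurrent p m n c \<longleftrightarrow> stable m n c \<and>
     (\<forall>d. (chain_step p m n)\<^sup>*\<^sup>* c d \<longrightarrow> (chain_step p m n)\<^sup>*\<^sup>* d c)"

definition level :: "nat \<Rightarrow> nat \<Rightarrow> config \<Rightarrow> int" where
  "level m n c = int (\<Sum>i=1..m. fst c i) + int (\<Sum>j=1..n. snd c j) - int (m * n)"

definition kcount :: "nat \<Rightarrow> config \<Rightarrow> nat \<Rightarrow> nat" where
  "kcount m c j = card {i \<in> {1..m}. fst c i < j}"

definition sorted_bottom :: "nat \<Rightarrow> config \<Rightarrow> nat list" where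
  "sorted_bottom n c = sort (map (snd c) [1..<n+1])"

end

theory Submission
  imports Defs "HOL-Library.Multiset" "HOL-Library.Product_Order"
begin

text \<open>
  The argument is organised around orientations of K_{m,n}^0 in which every sink edge points into
  the sink, and the property that c carries at least the in-degree at every non-sink vertex.
  The maximal stable configuration has this property, adding grains preserves it, and so does
  toppling, because the toppled vertex may reorient its edges. As every stable configuration
  leads to the maximal one, every recurrent configuration has the property. Conversely,
  explicit topplings lead from the maximal stable configuration to the in-degree configuration
  of any orientation in which no top vertex is a sink, and adding grains then leads to c.

  By a Gale--Ryser type argument, such an orientation exists iff for every set J of bottom
  vertices the grains on J are at least \<Sum>i. card J - c^t_i (truncated subtraction). The
  grains on J are smallest for the card J smallest bottom values, and
  k_1 + ... + k_s = \<Sum>i. s - c^t_i, which gives both the prefix condition and the level.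
\<close>

section \<open>Prefix sums and the numbers k_j\<close>

lemma sum_list_take_sorted_le_sum_mset:
  fixes zs :: "'a::{linorder, ordered_comm_monoid_add} list"
  assumes "sorted zs" and "M \<subseteq># mset zs"
  shows "sum_list (take (size M) zs) \<le> sum_mset M"
  using assms
proof (induction zs arbitrary: M)
  case Nil
  then show ?case by simp
next
  case (Cons z zs)
  show ?case
  proof (cases "z \<in># M")
    case True
    then obtain M' where M: "M = add_mset z M'" by (metis mset_add)
    have "sum_list (take (size M') zs) \<le> sum_mset M'"
      using Cons M by simp
    then show ?thesis using M by (simp add: add_left_mono)
  next
    case False
    have sub: "M \<subseteq># mset zs"
      unfolding subseteq_mset_def
    proof
      fix x
      have "count M x \<le> count (add_mset z (mset zs)) x"
        using mset_subset_eq_count[OF Cons.prems(2)] by simp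
      then show "count M x \<le> count (mset zs) x"
        using False by (cases "x = z") (auto simp: not_in_iff)
    qed
    show ?thesis
    proof (cases "size M")
      case 0
      then show ?thesis by simp
    next
      case (Suc k)
      have "size M \<le> length zs" using size_mset_mono[OF sub] by simp
      then have k: "k < length zs" using Suc by simp
      have "z \<le> zs ! k" using Cons.prems(1) k by simp
      then have "sum_list (take (size M) (z # zs)) \<le> sum_list (take (size M) zs)"
        using k Suc by (simp add: take_Suc_conv_app_nth add.commute add_right_mono)
      also have "\<dots> \<le> sum_mset M" using Cons.IH Cons.prems(1) sub by simp
      finally show ?thesis .
    qed
  qed
qed

lemma sum_list_take_sort_le_sum:
  fixes f :: "'b \<Rightarrow> 'a::{linorder, ordered_comm_monoid_add}"
  assumes "distinct xs" and "J \<subseteq> set xs"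
  shows "sum_list (take (card J) (sort (map f xs))) \<le> sum f J"
proof -
  have "mset_set J \<subseteq># mset xs"
    using subset_imp_msubset_mset_set[OF assms(2)] by (simp add: mset_set_set[OF assms(1)])
  then have "image_mset f (mset_set J) \<subseteq># mset (sort (map f xs))"
    by (simp add: image_mset_subseteq_mono)
  from sum_list_take_sorted_le_sum_mset[OF sorted_sort this]
  show ?thesis by (simp add: sum_unfold_sum_mset)
qed

lemma sort_map_eq_map_sort_key: "sort (map f xs) = map f (sort_key f xs)"
  by (metis mset_map mset_sort properties_for_sort sorted_sort_key)

lemma sum_list_take_sort_attained:
  assumes "distinct xs" and "k \<le> length xs"
  obtains J where "J \<subseteq> set xs" and "card J = k"
    and "sum f J = sum_list (take k (sort (map f xs)))"
proof
  let ?J = "set (take k (sort_key f xs))"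
  have "distinct (take k (sort_key f xs))" using assms(1) by simp
  then show "card ?J = k" and "sum f ?J = sum_list (take k (sort (map f xs)))"
    using assms by (simp_all add: distinct_card sort_map_eq_map_sort_key take_map
        sum_list_distinct_conv_sum_set)
  show "?J \<subseteq> set xs" by (metis set_sort set_take_subset)
qed

lemma sum_kcount: "(\<Sum>l=1..s. kcount m c l) = (\<Sum>i=1..m. s - fst c i)"
proof -
  have "(\<Sum>l=1..s. kcount m c l) = (\<Sum>l=1..s. \<Sum>i=1..m. of_bool (fst c i < l))"
    unfolding kcount_def by (simp add: Int_def)
  also have "\<dots> = (\<Sum>i=1..m. \<Sum>l=1..s. of_bool (fst c i < l))"
    by (rule sum.swap)
  also have "\<dots> = (\<Sum>i=1..m. s - fst c i)"
  proof (rule sum.cong[OF refl])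
    fix i
    have "{1..s} \<inter> {l. fst c i < l} = {Suc (fst c i)..s}" by auto
    then show "(\<Sum>l=1..s. of_bool (fst c i < l)) = s - fst c i" by simp
  qed
  finally show ?thesis .
qed

lemma level_eq_sum_kcount:
  assumes "stable m n c"
  shows "level m n c = int (\<Sum>j=1..n. snd c j) - int (\<Sum>l=1..n. kcount m c l)"
proof -
  have "int (\<Sum>l=1..n. kcount m c l) = (\<Sum>i=1..m. int (n - fst c i))"
    by (simp only: sum_kcount of_nat_sum)
  also have "\<dots> = (\<Sum>i=1..m. int n - int (fst c i))"
  proof (rule sum.cong[OF refl])
    fix i assume "i \<in> {1..m}"
    then have "fst c i \<le> n" using assms unfolding stable_def by (simp add: less_imp_le)
    then show "int (n - fst c i) = int n - int (fst c i)" by simp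
  qed
  finally show ?thesis unfolding level_def by (simp add: sum_subtractf)
qed

definition bottom_sum_condition :: "nat \<Rightarrow> nat \<Rightarrow> config \<Rightarrow> bool" where
  "bottom_sum_condition m n c \<longleftrightarrow>
     (\<forall>J\<subseteq>{1..n}. (\<Sum>i=1..m. card J - fst c i) \<le> sum (snd c) J)"

lemma sorted_prefix_condition_iff_bottom_sum_condition:
  "(\<forall>j\<in>{1..n}. (\<Sum>l=1..j. kcount m c l) \<le> sum_list (take j (sorted_bottom n c)))
     \<longleftrightarrow> bottom_sum_condition m n c"
proof
  assume prefix: "\<forall>j\<in>{1..n}. (\<Sum>l=1..j. kcount m c l) \<le> sum_list (take j (sorted_bottom n c))"
  show "bottom_sum_condition m n c"
    unfolding bottom_sum_condition_def
  proof (intro allI impI)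
    fix J assume J: "J \<subseteq> {1..n}"
    show "(\<Sum>i=1..m. card J - fst c i) \<le> sum (snd c) J"
    proof (cases "J = {}")
      case False
      then have "card J \<in> {1..n}"
        using J card_mono[OF _ J] finite_subset[OF J] by (auto simp: Suc_le_eq card_gt_0_iff)
      then have "(\<Sum>l=1..card J. kcount m c l) \<le> sum_list (take (card J) (sorted_bottom n c))"
        using prefix by blast
      then have "(\<Sum>i=1..m. card J - fst c i) \<le> sum_list (take (card J) (sorted_bottom n c))"
        by (simp only: sum_kcount)
      also have "\<dots> \<le> sum (snd c) J"
        unfolding sorted_bottom_def using J by (intro sum_list_take_sort_le_sum) auto
      finally show ?thesis .
    qed simp
  qed
next
  assume cond: "bottom_sum_condition m n c"
  show "\<forall>j\<in>{1..n}. (\<Sum>l=1..j. kcount m c l) \<le> sum_list (take j (sorted_bottom n c))"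
  proof
    fix j assume "j \<in> {1..n}"
    then have "distinct [1..<n+1]" and "j \<le> length [1..<n+1]" by auto
    then obtain J where J: "J \<subseteq> set [1..<n+1]" "card J = j"
      and sum_J: "sum (snd c) J = sum_list (take j (sorted_bottom n c))"
      unfolding sorted_bottom_def by (rule sum_list_take_sort_attained)
    have "J \<subseteq> {1..n}" using J(1) by auto
    then have "(\<Sum>i=1..m. j - fst c i) \<le> sum (snd c) J"
      using cond J(2) unfolding bottom_sum_condition_def by blast
    then show "(\<Sum>l=1..j. kcount m c l) \<le> sum_list (take j (sorted_bottom n c))"
      by (simp only: sum_kcount sum_J)
  qed
qed

section \<open>A Gale--Ryser type criterion\<close>

lemma obtain_subset_of_largest:
  fixes a :: "'a \<Rightarrow> 'b::linorder"
  assumes "finite I" and "k \<le> card I"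
  obtains A where "A \<subseteq> I" and "card A = k" and "\<forall>x\<in>A. \<forall>y\<in>I - A. a y \<le> a x"
proof -
  have "\<exists>A. A \<subseteq> I \<and> card A = k \<and> (\<forall>x\<in>A. \<forall>y\<in>I - A. a y \<le> a x)"
    using assms(2)
  proof (induction k)
    case 0
    show ?case by (intro exI[of _ "{}"]) simp
  next
    case (Suc k)
    then obtain A where A: "A \<subseteq> I" "card A = k" "\<forall>x\<in>A. \<forall>y\<in>I - A. a y \<le> a x"
      by auto
    have "finite (I - A)" and "I - A \<noteq> {}"
      using assms(1) A(1,2) Suc.prems card_mono[of A I] by auto
    then have "Max (a ` (I - A)) \<in> a ` (I - A)" by simp
    then obtain x where x: "x \<in> I - A" and "a x = Max (a ` (I - A))" by force
    then have "\<forall>y\<in>I - A. a y \<le> a x"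
      using \<open>finite (I - A)\<close> by simp
    then show ?case
      using x A finite_subset[OF A(1) assms(1)] by (intro exI[of _ "insert x A"]) auto
  qed
  then show ?thesis using that by blast
qed

text \<open>The exchange step of the Gale--Ryser argument, for N columns, a set of s of them with
  total capacity B, and another column of capacity b0: if that column goes to the rows A of
  largest demand, the remaining demands still fit into the s columns.\<close>

lemma sum_truncated_demands_exchange:
  fixes a :: "'a \<Rightarrow> nat"
  assumes "finite I" and "A \<subseteq> I" and largest: "\<forall>x\<in>A. \<forall>y\<in>I - A. a y \<le> a x"
    and "A = I \<or> card A = b0"
    and le: "(\<Sum>i\<in>I. a i + s - N) \<le> B" and le_Suc: "(\<Sum>i\<in>I. a i + Suc s - N) \<le> B + b0"
  shows "(\<Sum>i\<in>A. a i + s - N) + (\<Sum>i\<in>I - A. a i + Suc s - N) \<le> B"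
proof -
  have split: "(\<Sum>i\<in>I. f i) = (\<Sum>i\<in>A. f i) + (\<Sum>i\<in>I - A. f i)" for f :: "'a \<Rightarrow> nat"
    using assms(1,2) by (metis sum.subset_diff add.commute)
  consider "A = I" | "\<exists>i0\<in>A. a i0 + s < N" | "card A = b0" "\<forall>i\<in>A. N \<le> a i + s"
    using assms(4) by force
  then show ?thesis
  proof cases
    case 1
    then show ?thesis using le by simp
  next
    case 2
    then obtain i0 where "i0 \<in> A" "a i0 + s < N" by blast
    then have "a y + Suc s - N = a y + s - N" if "y \<in> I - A" for y
    proof -
      have "a y \<le> a i0" using largest that \<open>i0 \<in> A\<close> by blast
      then show ?thesis using \<open>a i0 + s < N\<close> by simp
    qed
    then have "(\<Sum>i\<in>I - A. a i + Suc s - N) = (\<Sum>i\<in>I - A. a i + s - N)"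
      by (intro sum.cong) auto
    then show ?thesis using le split[of "\<lambda>i. a i + s - N"] by simp
  next
    case 3
    then have "(\<Sum>i\<in>A. a i + Suc s - N) = (\<Sum>i\<in>A. Suc (a i + s - N))"
      by (intro sum.cong) auto
    also have "\<dots> = (\<Sum>i\<in>A. a i + s - N) + b0" using 3 by (simp add: sum_Suc)
    finally show ?thesis using le_Suc split[of "\<lambda>i. a i + Suc s - N"] by simp
  qed
qed

text \<open>Row i of a relation E \<subseteq> I \<times> C is to contain at least a i pairs and column j at most
  b j. At most card (C - J) pairs of row i avoid J, so the rows put at least
  \<Sum>i. a i - card (C - J) pairs into the columns J, which can take sum b J of them.\<close>

definition gale_ryser_condition :: "'a set \<Rightarrow> 'b set \<Rightarrow> ('a \<Rightarrow> nat) \<Rightarrow> ('b \<Rightarrow> nat) \<Rightarrow> bool" where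
  "gale_ryser_condition I C a b \<longleftrightarrow> (\<forall>J\<subseteq>C. (\<Sum>i\<in>I. a i + card J - card C) \<le> sum b J)"

lemma gale_ryser_condition_remove_column:
  assumes "finite I" and "finite C" and "j0 \<notin> C"
    and cond: "gale_ryser_condition I (insert j0 C) a b"
    and "A \<subseteq> I" and "card A = min (b j0) (card I)" and "\<forall>x\<in>A. \<forall>y\<in>I - A. a y \<le> a x"
  shows "gale_ryser_condition I C (\<lambda>i. a i - of_bool (i \<in> A)) b"
  unfolding gale_ryser_condition_def
proof (intro allI impI)
  fix J assume J: "J \<subseteq> C"
  have "finite J" and "j0 \<notin> J" and "card J \<le> card C"
    using J assms(2,3) finite_subset card_mono by auto
  have le: "(\<Sum>i\<in>I. a i + card J - Suc (card C)) \<le> sum b J"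
    using cond J assms(2,3) unfolding gale_ryser_condition_def by auto
  have le_Suc: "(\<Sum>i\<in>I. a i + Suc (card J) - Suc (card C)) \<le> sum b J + b j0"
    using cond J assms(2,3) \<open>finite J\<close> \<open>j0 \<notin> J\<close> unfolding gale_ryser_condition_def
    by (auto simp: add.commute dest: spec[of _ "insert j0 J"])
  have "A = I \<or> card A = b j0"
    using assms(1,5,6) by (metis card_subset_eq min_def)
  have "(\<Sum>i\<in>A. a i - of_bool (i \<in> A) + card J - card C) = (\<Sum>i\<in>A. a i + card J - Suc (card C))"
    using \<open>card J \<le> card C\<close> by (intro sum.cong) auto
  moreover have "(\<Sum>i\<in>I - A. a i - of_bool (i \<in> A) + card J - card C)
      = (\<Sum>i\<in>I - A. a i + Suc (card J) - Suc (card C))"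
    by (intro sum.cong) auto
  ultimately have "(\<Sum>i\<in>I. a i - of_bool (i \<in> A) + card J - card C)
      = (\<Sum>i\<in>A. a i + card J - Suc (card C)) + (\<Sum>i\<in>I - A. a i + Suc (card J) - Suc (card C))"
    using assms(1,5) by (simp add: sum.subset_diff[of A I])
  also have "\<dots> \<le> sum b J"
    using sum_truncated_demands_exchange assms(1,5,7) \<open>A = I \<or> card A = b j0\<close> le le_Suc .
  finally show "(\<Sum>i\<in>I. a i - of_bool (i \<in> A) + card J - card C) \<le> sum b J" .
qed

text \<open>Induction on C: the new column is given to the rows of largest demand.\<close>

lemma obtain_relation_with_degree_bounds:
  fixes a :: "'a \<Rightarrow> nat" and b :: "'b \<Rightarrow> nat"
  assumes "finite I" and "finite C" and "gale_ryser_condition I C a b"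
  obtains E where "E \<subseteq> I \<times> C" and "\<forall>i\<in>I. a i \<le> card {j. (i, j) \<in> E}"
    and "\<forall>j\<in>C. card {i. (i, j) \<in> E} \<le> b j"
proof -
  have "\<exists>E\<subseteq>I \<times> C. (\<forall>i\<in>I. a i \<le> card {j. (i, j) \<in> E}) \<and> (\<forall>j\<in>C. card {i. (i, j) \<in> E} \<le> b j)"
    using assms(2,3)
  proof (induction C arbitrary: a rule: finite_induct)
    case empty
    then have "\<forall>i\<in>I. a i = 0" using assms(1) by (simp add: gale_ryser_condition_def)
    then show ?case by (intro exI[of _ "{}"]) simp
  next
    case (insert j0 C)
    obtain A where A: "A \<subseteq> I" "card A = min (b j0) (card I)" "\<forall>x\<in>A. \<forall>y\<in>I - A. a y \<le> a x"
      using obtain_subset_of_largest[OF assms(1), of "min (b j0) (card I)" a] by auto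
    from insert.IH[OF gale_ryser_condition_remove_column[OF assms(1) insert.hyps insert.prems A]]
    obtain E' where E': "E' \<subseteq> I \<times> C" "\<forall>i\<in>I. a i - of_bool (i \<in> A) \<le> card {j. (i, j) \<in> E'}"
      "\<forall>j\<in>C. card {i. (i, j) \<in> E'} \<le> b j"
      by blast
    define E where "E = E' \<union> A \<times> {j0}"
    have row: "card {j. (i, j) \<in> E} = card {j. (i, j) \<in> E'} + of_bool (i \<in> A)" for i
    proof -
      have "finite {j. (i, j) \<in> E'}" and "j0 \<notin> {j. (i, j) \<in> E'}"
        using E'(1) insert.hyps(1,2) by (auto intro: finite_subset[of _ C])
      moreover have "{j. (i, j) \<in> E} = (if i \<in> A then insert j0 {j. (i, j) \<in> E'} else {j. (i, j) \<in> E'})"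
        unfolding E_def by auto
      ultimately show ?thesis by simp
    qed
    have col: "{i. (i, j) \<in> E} = (if j = j0 then A else {i. (i, j) \<in> E'})" if "j \<in> insert j0 C" for j
      using E'(1) insert.hyps(2) that unfolding E_def by auto
    show ?case
    proof (intro exI[of _ E] conjI ballI)
      show "E \<subseteq> I \<times> insert j0 C" using E'(1) A(1) unfolding E_def by auto
      show "a i \<le> card {j. (i, j) \<in> E}" if "i \<in> I" for i
        using E'(2) that unfolding row by fastforce
      show "card {i. (i, j) \<in> E} \<le> b j" if "j \<in> insert j0 C" for j
        using E'(3) A(2) that unfolding col[OF that] by auto
    qed
  qed
  then show ?thesis using that by blast
qed

section \<open>Orientations dominated by a configuration\<close>

lemma finite_row_col:
  fixes m n :: nat
  assumes "E \<subseteq> {1..m} \<times> {1..n}"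
  shows "finite {j. (i, j) \<in> E}" and "finite {i. (i, j) \<in> E}"
proof -
  show "finite {j. (i, j) \<in> E}" by (rule finite_subset[of _ "{1..n}"]) (use assms in auto)
  show "finite {i. (i, j) \<in> E}" by (rule finite_subset[of _ "{1..m}"]) (use assms in auto)
qed

text \<open>An orientation of K_{m,n}^0 in which every sink edge points into the sink is encoded by
  the set E of pairs (i, j) such that the edge between v^t_i and v^b_j points from top to
  bottom. Its in-degrees form the following configuration.\<close>

definition indeg_config :: "nat \<Rightarrow> nat \<Rightarrow> (nat \<times> nat) set \<Rightarrow> config" where
  "indeg_config m n E =
     (\<lambda>i. if i \<in> {1..m} then n - card {j. (i, j) \<in> E} else 0,
      \<lambda>j. if j \<in> {1..n} then card {i. (i, j) \<in> E} else 0)"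

definition dominates_orientation :: "nat \<Rightarrow> nat \<Rightarrow> config \<Rightarrow> (nat \<times> nat) set \<Rightarrow> bool" where
  "dominates_orientation m n c E \<longleftrightarrow> E \<subseteq> {1..m} \<times> {1..n} \<and> indeg_config m n E \<le> c"

lemma dominates_orientation_iff:
  "dominates_orientation m n c E \<longleftrightarrow> E \<subseteq> {1..m} \<times> {1..n} \<and>
     (\<forall>i\<in>{1..m}. n - card {j. (i, j) \<in> E} \<le> fst c i) \<and>
     (\<forall>j\<in>{1..n}. card {i. (i, j) \<in> E} \<le> snd c j)"
  unfolding dominates_orientation_def indeg_config_def less_eq_prod_def le_fun_def by auto

text \<open>Double counting of the edges pointing from top vertices into J: at least card J - c^t_i
  of them leave v^t_i, and at most c^b_j of them enter v^b_j.\<close>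

lemma bottom_sum_condition_if_dominates_orientation:
  assumes "dominates_orientation m n c E"
  shows "bottom_sum_condition m n c"
  unfolding bottom_sum_condition_def
proof (intro allI impI)
  fix J assume J: "J \<subseteq> {1..n}"
  have E: "E \<subseteq> {1..m} \<times> {1..n}" using assms unfolding dominates_orientation_iff by blast
  have "finite J" using J finite_subset by blast
  have row_J: "card J - fst c i \<le> card {j\<in>J. (i, j) \<in> E}" if "i \<in> {1..m}" for i
  proof -
    have row: "{j. (i, j) \<in> E} \<subseteq> {1..n}" using E by auto
    have "finite {j. (i, j) \<in> E}" using finite_row_col(1)[OF E] .
    have "card J \<le> card ({j\<in>J. (i, j) \<in> E} \<union> ({1..n} - {j. (i, j) \<in> E}))"
      using J \<open>finite J\<close> by (intro card_mono) auto
    also have "\<dots> \<le> card {j\<in>J. (i, j) \<in> E} + (n - card {j. (i, j) \<in> E})"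
      using card_Un_le[of "{j\<in>J. (i, j) \<in> E}" "{1..n} - {j. (i, j) \<in> E}"]
        card_Diff_subset[OF \<open>finite {j. (i, j) \<in> E}\<close> row] by simp
    also have "\<dots> \<le> card {j\<in>J. (i, j) \<in> E} + fst c i"
      using assms that unfolding dominates_orientation_iff by simp
    finally show ?thesis by simp
  qed
  have "(\<Sum>i=1..m. card J - fst c i) \<le> (\<Sum>i=1..m. card {j\<in>J. (i, j) \<in> E})"
    using row_J by (intro sum_mono) auto
  also have "\<dots> = (\<Sum>i=1..m. \<Sum>j\<in>J. of_bool ((i, j) \<in> E))"
    using \<open>finite J\<close> by (simp add: Int_def)
  also have "\<dots> = (\<Sum>j\<in>J. \<Sum>i=1..m. of_bool ((i, j) \<in> E))"
    by (rule sum.swap)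
  also have "\<dots> = (\<Sum>j\<in>J. card {i. (i, j) \<in> E})"
    using E by (intro sum.cong) (auto simp: Int_def intro!: arg_cong[where f = card])
  also have "\<dots> \<le> sum (snd c) J"
    using assms J unfolding dominates_orientation_iff by (intro sum_mono) auto
  finally show "(\<Sum>i=1..m. card J - fst c i) \<le> sum (snd c) J" .
qed

lemma obtain_dominated_orientation:
  assumes "bottom_sum_condition m n c"
  obtains E where "dominates_orientation m n c E"
proof -
  have "gale_ryser_condition {1..m} {1..n} (\<lambda>i. n - fst c i) (snd c)"
    unfolding gale_ryser_condition_def
  proof (intro allI impI)
    fix J assume "J \<subseteq> {1..n}"
    then have "card J \<le> n" using card_mono[of "{1..n}" J] by simp
    then have "(\<Sum>i\<in>{1..m}. (n - fst c i) + card J - card {1..n}) = (\<Sum>i=1..m. card J - fst c i)"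
      by (intro sum.cong) auto
    then show "(\<Sum>i\<in>{1..m}. (n - fst c i) + card J - card {1..n}) \<le> sum (snd c) J"
      using assms \<open>J \<subseteq> {1..n}\<close> unfolding bottom_sum_condition_def by simp
  qed
  then obtain E where "E \<subseteq> {1..m} \<times> {1..n}" "\<forall>i\<in>{1..m}. n - fst c i \<le> card {j. (i, j) \<in> E}"
    "\<forall>j\<in>{1..n}. card {i. (i, j) \<in> E} \<le> snd c j"
    by (rule obtain_relation_with_degree_bounds[rotated 2]) simp_all
  then have "dominates_orientation m n c E"
    unfolding dominates_orientation_iff by auto
  then show ?thesis by (rule that)
qed

lemma ex_dominated_orientation_iff_bottom_sum_condition:
  "(\<exists>E. dominates_orientation m n c E) \<longleftrightarrow> bottom_sum_condition m n c"
  using bottom_sum_condition_if_dominates_orientation obtain_dominated_orientation by metis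

lemma chain_steps_invariant:
  assumes "(chain_step p m n)\<^sup>*\<^sup>* c d" and "P c"
    and add_top: "\<And>c i. P c \<Longrightarrow> i \<in> {1..m} \<Longrightarrow> P (add_top i c)"
    and add_bot: "\<And>c j. P c \<Longrightarrow> j \<in> {1..n} \<Longrightarrow> P (add_bot j c)"
    and topple: "\<And>c d. ssm_topple p m n c d \<Longrightarrow> P c \<Longrightarrow> P d"
  shows "P d"
proof -
  have topples: "P d" if "(ssm_topple p m n)\<^sup>*\<^sup>* c d" "P c" for c d
    using that by (induction rule: rtranclp_induct) (auto intro: topple)
  have step: "P d" if "chain_step p m n c d" "P c" for c d
    using that add_top add_bot topples unfolding chain_step_def by blast
  show ?thesis
    using assms(1,2) by (induction rule: rtranclp_induct) (auto intro: step)
qed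

lemma config_wf_chain_steps:
  assumes "(chain_step p m n)\<^sup>*\<^sup>* c d" and "config_wf m n c"
  shows "config_wf m n d"
  using assms
proof (rule chain_steps_invariant)
  show "config_wf m n d" if "ssm_topple p m n c d" "config_wf m n c" for c d
    using that by cases (auto simp: config_wf_def)
qed (auto simp: config_wf_def add_top_def add_bot_def)

lemma dominates_orientation_mono:
  assumes "dominates_orientation m n c E" and "c \<le> d"
  shows "dominates_orientation m n d E"
  using assms order_trans unfolding dominates_orientation_def by blast

text \<open>A vertex that topples reorients all its edges towards itself, except those along which it
  sent a grain.\<close>

lemma dominates_orientation_top_topple:
  assumes "dominates_orientation m n (ct, cb) E" and "i \<in> {1..m}" and "n \<le> ct i"
    and "S \<subseteq> {1..n}"
  shows "dominates_orientation m n (ct(i := ct i - card S), \<lambda>j. cb j + (if j \<in> S then 1 else 0))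
           ({x\<in>E. fst x \<noteq> i} \<union> {i} \<times> S)"
    (is "dominates_orientation m n ?d ?E")
  unfolding dominates_orientation_iff
proof (intro conjI ballI)
  have E: "E \<subseteq> {1..m} \<times> {1..n}" using assms(1) unfolding dominates_orientation_iff by blast
  then show "?E \<subseteq> {1..m} \<times> {1..n}" using assms(2,4) by auto
  show "n - card {j. (i', j) \<in> ?E} \<le> fst ?d i'" if "i' \<in> {1..m}" for i'
  proof (cases "i' = i")
    case True
    then have "{j. (i', j) \<in> ?E} = S" by auto
    then show ?thesis using True assms(3) by simp
  next
    case False
    then have "{j. (i', j) \<in> ?E} = {j. (i', j) \<in> E}" by auto
    then show ?thesis using False assms(1) that unfolding dominates_orientation_iff by simp
  qed
  show "card {i'. (i', j) \<in> ?E} \<le> snd ?d j" if "j \<in> {1..n}" for j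
  proof -
    have fin: "finite {i'. (i', j) \<in> E}" using finite_row_col(2)[OF E] .
    have "card {i'. (i', j) \<in> ?E}
        \<le> card (if j \<in> S then insert i {i'. (i', j) \<in> E} else {i'. (i', j) \<in> E})"
      using fin by (intro card_mono) auto
    also have "\<dots> \<le> card {i'. (i', j) \<in> E} + (if j \<in> S then 1 else 0)"
      using fin by (simp add: card_insert_le_m1 card_insert_if)
    finally show ?thesis using assms(1) that unfolding dominates_orientation_iff by fastforce
  qed
qed

lemma dominates_orientation_bot_topple:
  assumes "dominates_orientation m n (ct, cb) E" and "j \<in> {1..n}" and "m + 1 \<le> cb j"
    and "S \<subseteq> {0..m}"
  shows "dominates_orientation m n (\<lambda>i. ct i + (if i \<in> S \<and> i \<noteq> 0 then 1 else 0), cb(j := cb j - card S))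
           ({x\<in>E. snd x \<noteq> j} \<union> ({1..m} - S) \<times> {j})"
    (is "dominates_orientation m n ?d ?E")
  unfolding dominates_orientation_iff
proof (intro conjI ballI)
  have E: "E \<subseteq> {1..m} \<times> {1..n}" using assms(1) unfolding dominates_orientation_iff by blast
  then show "?E \<subseteq> {1..m} \<times> {1..n}" using assms(2) by auto
  show "n - card {j'. (i, j') \<in> ?E} \<le> fst ?d i" if "i \<in> {1..m}" for i
  proof -
    have fin: "finite {j'. (i, j') \<in> E}" using finite_row_col(1)[OF E] .
    have old: "n - card {j'. (i, j') \<in> E} \<le> ct i"
      using assms(1) that unfolding dominates_orientation_iff by simp
    show ?thesis
    proof (cases "i \<in> S")
      case True
      then have "{j'. (i, j') \<in> ?E} = {j'. (i, j') \<in> E} - {j}" by auto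
      then have "card {j'. (i, j') \<in> E} \<le> card {j'. (i, j') \<in> ?E} + 1"
        using diff_card_le_card_Diff[of "{j}" "{j'. (i, j') \<in> E}"] by simp
      then show ?thesis using old True that by simp
    next
      case False
      then have "{j'. (i, j') \<in> ?E} = insert j {j'. (i, j') \<in> E}" using that by auto
      then have "card {j'. (i, j') \<in> E} \<le> card {j'. (i, j') \<in> ?E}"
        using fin by (simp add: card_insert_le)
      then show ?thesis using old False by simp
    qed
  qed
  show "card {i. (i, j') \<in> ?E} \<le> snd ?d j'" if "j' \<in> {1..n}" for j'
  proof (cases "j' = j")
    case True
    have "card ({1..m} - S) + card S = card (({1..m} - S) \<union> S)"
      using assms(4) finite_subset by (intro card_Un_disjoint[symmetric]) auto
    also have "\<dots> \<le> m + 1"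
      using assms(4) card_mono[of "{0..m}" "({1..m} - S) \<union> S"] by auto
    finally have "card ({1..m} - S) \<le> cb j - card S" using assms(3) by simp
    moreover have "{i. (i, j') \<in> ?E} = {1..m} - S" using True E by auto
    ultimately show ?thesis using True by simp
  next
    case False
    then have "{i. (i, j') \<in> ?E} = {i. (i, j') \<in> E}" by auto
    then show ?thesis using False assms(1) that unfolding dominates_orientation_iff by simp
  qed
qed

lemma ex_dominated_orientation_topple:
  assumes "ssm_topple p m n c d" and "dominates_orientation m n c E"
  shows "\<exists>E'. dominates_orientation m n d E'"
  using assms(1)
proof cases
  case (top i ct S cb)
  then show ?thesis using dominates_orientation_top_topple assms(2) by blast
next
  case (bot j cb S ct)
  then show ?thesis using dominates_orientation_bot_topple assms(2) by blast
qed

lemma ex_dominated_orientation_chain_steps: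
  assumes "(chain_step p m n)\<^sup>*\<^sup>* c d" and "dominates_orientation m n c E"
  shows "\<exists>E'. dominates_orientation m n d E'"
  using assms(1)
proof (rule chain_steps_invariant)
  show "\<exists>E. dominates_orientation m n c E" using assms(2) by blast
  show "\<exists>E. dominates_orientation m n (add_top i c) E" if "\<exists>E. dominates_orientation m n c E" for c i
  proof -
    have "c \<le> add_top i c" by (simp add: add_top_def less_eq_prod_def le_fun_def)
    then show ?thesis using that dominates_orientation_mono by blast
  qed
  show "\<exists>E. dominates_orientation m n (add_bot j c) E" if "\<exists>E. dominates_orientation m n c E" for c j
  proof -
    have "c \<le> add_bot j c" by (simp add: add_bot_def less_eq_prod_def le_fun_def)
    then show ?thesis using that dominates_orientation_mono by blast
  qed
qed (use ex_dominated_orientation_topple in blast)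

section \<open>Paths in the Markov chain\<close>

lemma chain_step_add_top:
  assumes "stable m n d" and "i \<in> {1..m}" and "fst d i + 1 < n"
  shows "chain_step p m n d (add_top i d)"
  using assms unfolding chain_step_def stable_def add_top_def by auto

lemma chain_step_add_bot:
  assumes "stable m n d" and "j \<in> {1..n}" and "snd d j < m"
  shows "chain_step p m n d (add_bot j d)"
  using assms unfolding chain_step_def stable_def add_bot_def by auto

lemma le_config_neq_cases:
  assumes "config_wf m n d" and "config_wf m n d'" and "d \<le> d'" and "d \<noteq> d'"
  obtains (top) i where "i \<in> {1..m}" and "fst d i < fst d' i"
    | (bot) j where "j \<in> {1..n}" and "snd d j < snd d' j"
proof -
  obtain k where "fst d k \<noteq> fst d' k \<or> snd d k \<noteq> snd d' k"
    using assms(4) by (auto simp: prod_eq_iff fun_eq_iff)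
  moreover have "fst d k \<le> fst d' k" and "snd d k \<le> snd d' k"
    using assms(3) by (auto simp: less_eq_prod_def le_fun_def)
  ultimately show ?thesis
    using that assms(1,2) unfolding config_wf_def by (metis order_less_le)
qed

text \<open>Add grains one at a time, never creating an unstable vertex.\<close>

lemma chain_steps_if_le:
  assumes "stable m n d" and "stable m n d'" and "config_wf m n d" and "config_wf m n d'"
    and "d \<le> d'"
  shows "(chain_step p m n)\<^sup>*\<^sup>* d d'"
  using assms
proof (induction "(\<Sum>i=1..m. fst d' i - fst d i) + (\<Sum>j=1..n. snd d' j - snd d j)"
    arbitrary: d rule: less_induct)
  case less
  have le: "fst d k \<le> fst d' k" "snd d k \<le> snd d' k" for k
    using less.prems(5) by (auto simp: less_eq_prod_def le_fun_def)
  show ?case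
  proof (cases "d = d'")
    case False
    then show ?thesis
    proof (cases rule: le_config_neq_cases[OF less.prems(3-5) False, case_names top bot])
      case (top i)
      have "fst d i + 1 < n" using less.prems(2) top unfolding stable_def by fastforce
      then have step: "chain_step p m n d (add_top i d)"
        by (rule chain_step_add_top[OF less.prems(1) top(1)])
      have "(\<Sum>k=1..m. fst d' k - fst (add_top i d) k) < (\<Sum>k=1..m. fst d' k - fst d k)"
        using top le by (intro sum_strict_mono_ex1) (auto simp: add_top_def)
      then have "(chain_step p m n)\<^sup>*\<^sup>* (add_top i d) d'"
        using less top step
        by (intro less.hyps) (auto simp: chain_step_def config_wf_def add_top_def less_eq_prod_def le_fun_def)
      with step show ?thesis by (rule converse_rtranclp_into_rtranclp)
    next
      case (bot j)
      have "snd d j < m" using less.prems(2) bot unfolding stable_def by fastforce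
      then have step: "chain_step p m n d (add_bot j d)"
        by (rule chain_step_add_bot[OF less.prems(1) bot(1)])
      have "(\<Sum>l=1..n. snd d' l - snd (add_bot j d) l) < (\<Sum>l=1..n. snd d' l - snd d l)"
        using bot le by (intro sum_strict_mono_ex1) (auto simp: add_bot_def)
      then have "(chain_step p m n)\<^sup>*\<^sup>* (add_bot j d) d'"
        using less bot step
        by (intro less.hyps) (auto simp: chain_step_def config_wf_def add_bot_def less_eq_prod_def le_fun_def)
      with step show ?thesis by (rule converse_rtranclp_into_rtranclp)
    qed
  qed simp
qed

definition max_stable :: "nat \<Rightarrow> nat \<Rightarrow> config" where
  "max_stable m n = (\<lambda>i. if i \<in> {1..m} then n - 1 else 0, \<lambda>j. if j \<in> {1..n} then m else 0)"

lemma stable_max_stable: "1 \<le> n \<Longrightarrow> stable m n (max_stable m n)"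
  unfolding stable_def max_stable_def by auto

lemma config_wf_max_stable: "config_wf m n (max_stable m n)"
  unfolding config_wf_def max_stable_def by auto

lemma le_max_stable:
  assumes "stable m n d" and "config_wf m n d"
  shows "d \<le> max_stable m n"
  unfolding less_eq_prod_def le_fun_def
proof (intro conjI allI)
  show "fst d i \<le> fst (max_stable m n) i" for i
  proof (cases "i \<in> {1..m}")
    case True
    then have "fst d i < n" using assms(1) unfolding stable_def by blast
    then show ?thesis using True unfolding max_stable_def by simp
  qed (use assms(2) in \<open>simp add: config_wf_def\<close>)
  show "snd d j \<le> snd (max_stable m n) j" for j
  proof (cases "j \<in> {1..n}")
    case True
    then have "snd d j < m + 1" using assms(1) unfolding stable_def by blast
    then show ?thesis using True unfolding max_stable_def by simp
  qed (use assms(2) in \<open>simp add: config_wf_def\<close>)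
qed

lemma chain_steps_to_max_stable:
  assumes "1 \<le> n" and "stable m n d" and "config_wf m n d"
  shows "(chain_step p m n)\<^sup>*\<^sup>* d (max_stable m n)"
  using assms by (intro chain_steps_if_le stable_max_stable config_wf_max_stable le_max_stable)

lemma topple_prob_pos: "0 < p \<Longrightarrow> p < 1 \<Longrightarrow> 0 < topple_prob p d s"
  unfolding topple_prob_def by simp

lemma ssm_topple_topI:
  assumes "0 < p" and "p < 1" and "i \<in> {1..m}" and "n \<le> ct i" and "S \<subseteq> {1..n}"
    and "d = (ct(i := ct i - card S), \<lambda>j. cb j + (if j \<in> S then 1 else 0))"
  shows "ssm_topple p m n (ct, cb) d"
  unfolding assms(6) by (rule ssm_topple.top) (use assms topple_prob_pos in auto)

lemma ssm_topple_botI: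
  assumes "0 < p" and "p < 1" and "j \<in> {1..n}" and "m + 1 \<le> cb j" and "S \<subseteq> {0..m}"
    and "d = (\<lambda>i. ct i + (if i \<in> S \<and> i \<noteq> 0 then 1 else 0), cb(j := cb j - card S))"
  shows "ssm_topple p m n (ct, cb) d"
  unfolding assms(6) by (rule ssm_topple.bot) (use assms topple_prob_pos in auto)

lemma ssm_topple_to_sink:
  assumes "0 < p" and "p < 1" and "j \<in> {1..n}" and "m + 1 \<le> cb j"
  shows "ssm_topple p m n (ct, cb) (ct, cb(j := cb j - 1))"
  by (rule ssm_topple_botI[where S = "{0}"]) (use assms in \<open>auto simp: fun_eq_iff\<close>)

text \<open>Tops in T holding n grains each pass one grain to v^b_n, which passes it on to the
  sink.\<close>

lemma ssm_topples_tops_through_last_bottom: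
  assumes "0 < p" and "p < 1" and "1 \<le> n" and "finite T" and "T \<subseteq> {1..m}"
    and "\<forall>i\<in>T. n \<le> ct i + 1" and "cb n = m"
  shows "(ssm_topple p m n)\<^sup>*\<^sup>* (\<lambda>i. ct i + (if i \<in> T then 1 else 0), cb) (ct, cb)"
  using assms(4-6)
proof (induction T rule: finite_induct)
  case empty
  then show ?case by simp
next
  case (insert x T)
  let ?ct = "\<lambda>i. ct i + (if i \<in> T then 1 else 0)"
  have "ssm_topple p m n (\<lambda>i. ct i + (if i \<in> insert x T then 1 else 0), cb) (?ct, cb(n := m + 1))"
    by (rule ssm_topple_topI[where i = x and S = "{n}"]) (use insert assms in \<open>auto simp: fun_eq_iff\<close>)
  moreover have "ssm_topple p m n (?ct, cb(n := m + 1)) (?ct, cb)"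
    using ssm_topple_to_sink[OF assms(1,2), where j = n and cb = "cb(n := m + 1)" and ct = ?ct] assms(3,7)
    by (simp add: fun_upd_idem)
  moreover have "(ssm_topple p m n)\<^sup>*\<^sup>* (?ct, cb) (ct, cb)" using insert by simp
  ultimately show ?case by (meson converse_rtranclp_into_rtranclp)
qed

definition emptied_config :: "nat \<Rightarrow> nat \<Rightarrow> nat set \<Rightarrow> config" where
  "emptied_config m n P = (fst (max_stable m n), \<lambda>j. if j \<in> P then 0 else snd (max_stable m n) j)"

text \<open>A grain added at v^b_j makes it send all its m + 1 grains away, one to each top and
  one to the sink; the tops then return their extra grains through v^b_n.\<close>

lemma chain_steps_max_stable_emptied:
  assumes "0 < p" and "p < 1" and "1 \<le> n" and "P \<subseteq> {1..n-1}"
  shows "(chain_step p m n)\<^sup>*\<^sup>* (max_stable m n) (emptied_config m n P)"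
proof -
  have "finite P" using assms(4) finite_subset by blast
  then show ?thesis using assms(4)
  proof (induction P rule: finite_induct)
    case empty
    then show ?case by (simp add: emptied_config_def)
  next
    case (insert j P)
    have j: "j \<in> {1..n}" "j \<noteq> n" using insert by auto
    have stable: "stable m n (emptied_config m n P)" for P
      using assms(3) unfolding stable_def emptied_config_def max_stable_def by auto
    let ?ct = "fst (max_stable m n)"
    let ?cbP = "snd (emptied_config m n P)" and ?cbQ = "snd (emptied_config m n (insert j P))"
    have add: "add_bot j (emptied_config m n P) = (?ct, ?cbP(j := m + 1))"
      unfolding add_bot_def emptied_config_def using insert j by (simp add: max_stable_def)
    have "ssm_topple p m n (?ct, ?cbP(j := m + 1)) (\<lambda>i. ?ct i + (if i \<in> {1..m} then 1 else 0), ?cbQ)"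
      by (rule ssm_topple_botI[where S = "{0..m}"])
        (use assms j in \<open>auto simp: fun_eq_iff emptied_config_def\<close>)
    moreover have "(ssm_topple p m n)\<^sup>*\<^sup>* (\<lambda>i. ?ct i + (if i \<in> {1..m} then 1 else 0), ?cbQ) (?ct, ?cbQ)"
      by (rule ssm_topples_tops_through_last_bottom[OF assms(1-3)])
        (use insert assms(3) in \<open>auto simp: max_stable_def emptied_config_def\<close>)
    ultimately have "(ssm_topple p m n)\<^sup>*\<^sup>* (add_bot j (emptied_config m n P)) (emptied_config m n (insert j P))"
      unfolding add by (simp add: emptied_config_def converse_rtranclp_into_rtranclp)
    then have "chain_step p m n (emptied_config m n P) (emptied_config m n (insert j P))"
      unfolding chain_step_def using stable j(1) by blast
    with insert show ?case by simp
  qed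
qed

text \<open>The tops in Q have fired once, along their row of E and along the edge to v^b_n; each
  grain arriving at v^b_n was passed on to the sink.\<close>

definition fired_config :: "nat \<Rightarrow> nat \<Rightarrow> (nat \<times> nat) set \<Rightarrow> nat set \<Rightarrow> config" where
  "fired_config m n E Q =
     (\<lambda>i. if i \<in> Q then n - card (insert n {j. (i, j) \<in> E}) else if i \<in> {1..m} then n - 1 else 0,
      \<lambda>j. if j \<in> {1..n-1} then card {i\<in>Q. (i, j) \<in> E} else if j = n then m else 0)"

lemma emptied_config_eq_fired_config:
  "1 \<le> n \<Longrightarrow> emptied_config m n {1..n-1} = fired_config m n E {}"
  unfolding emptied_config_def fired_config_def max_stable_def by (auto simp: fun_eq_iff)

lemma stable_fired_config:
  assumes "1 \<le> n" and "Q \<subseteq> {1..m}" and "E \<subseteq> {1..m} \<times> {1..n}"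
  shows "stable m n (fired_config m n E Q)"
  unfolding stable_def
proof (intro conjI ballI)
  fix i assume "i \<in> {1..m}"
  have "0 < card (insert n {j. (i, j) \<in> E})"
    using finite_row_col(1)[OF assms(3)] by (simp add: card_gt_0_iff)
  then show "fst (fired_config m n E Q) i < n" using assms(1) unfolding fired_config_def by auto
next
  fix j assume "j \<in> {1..n}"
  have "card {i\<in>Q. (i, j) \<in> E} \<le> card {1..m}"
    using assms(2) by (intro card_mono) auto
  then show "snd (fired_config m n E Q) j < m + 1" unfolding fired_config_def by auto
qed

lemma fired_config_insert:
  assumes "1 \<le> n" and "E \<subseteq> {1..m} \<times> {1..n}" and "finite Q" and "i \<notin> Q"
  shows "fired_config m n E (insert i Q) =
    ((fst (fired_config m n E Q))(i := n - card (insert n {j. (i, j) \<in> E})),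
     (\<lambda>j. snd (fired_config m n E Q) j + (if j \<in> insert n {j. (i, j) \<in> E} then 1 else 0))(n := m))"
    (is "_ = ?rhs")
proof (rule prod_eqI)
  show "fst (fired_config m n E (insert i Q)) = fst ?rhs"
    unfolding fired_config_def by (auto simp: fun_eq_iff)
  show "snd (fired_config m n E (insert i Q)) = snd ?rhs"
  proof
    fix j
    consider "j \<in> {1..n-1}" | "j = n" | "j \<notin> {1..n}" using assms(1) by force
    then show "snd (fired_config m n E (insert i Q)) j = snd ?rhs j"
    proof cases
      case 1
      have "{x\<in>insert i Q. (x, j) \<in> E}
          = (if (i, j) \<in> E then insert i {x\<in>Q. (x, j) \<in> E} else {x\<in>Q. (x, j) \<in> E})"
        by auto
      then have "card {x\<in>insert i Q. (x, j) \<in> E} = card {x\<in>Q. (x, j) \<in> E} + (if (i, j) \<in> E then 1 else 0)"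
        using assms(3,4) by simp
      moreover have "j \<noteq> n" using 1 by auto
      ultimately show ?thesis using 1 unfolding fired_config_def by simp
    next
      case 3
      then have "(i, j) \<notin> E" using assms(2) by auto
      moreover have "j \<noteq> n" and "j \<notin> {1..n-1}" using 3 assms(1) by auto
      ultimately show ?thesis unfolding fired_config_def by auto
    qed (use assms(1) in \<open>auto simp: fired_config_def\<close>)
  qed
qed

lemma chain_step_fire_top:
  assumes "0 < p" and "p < 1" and "1 \<le> n" and "E \<subseteq> {1..m} \<times> {1..n}" and "Q \<subseteq> {1..m}"
    and "i \<in> {1..m}" and "i \<notin> Q"
  shows "chain_step p m n (fired_config m n E Q) (fired_config m n E (insert i Q))"
proof -
  obtain ct cb where Q: "fired_config m n E Q = (ct, cb)" by fastforce
  define B where "B = insert n {j. (i, j) \<in> E}"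
  let ?cb = "\<lambda>j. cb j + (if j \<in> B then 1 else 0)"
  have B: "B \<subseteq> {1..n}" using assms(3,4) unfolding B_def by auto
  have "ct i = n - 1" and "cb n = m"
    using Q assms(3,6,7) unfolding fired_config_def by (auto simp: prod_eq_iff)
  then have "add_top i (fired_config m n E Q) = (ct(i := n), cb)"
    unfolding Q add_top_def using assms(3) by simp
  moreover have "ssm_topple p m n (ct(i := n), cb) (ct(i := n - card B), ?cb)"
    by (rule ssm_topple_topI[where S = B]) (use assms B in auto)
  moreover have "ssm_topple p m n (ct(i := n - card B), ?cb) (ct(i := n - card B), ?cb(n := m))"
    using ssm_topple_to_sink[OF assms(1,2), where j = n and cb = ?cb and ct = "ct(i := n - card B)"
        and m = m and n = n] assms(3) \<open>cb n = m\<close>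
    unfolding B_def by simp
  moreover have "(ct(i := n - card B), ?cb(n := m)) = fired_config m n E (insert i Q)"
    using fired_config_insert[OF assms(3,4) finite_subset[OF assms(5)] assms(7)] Q
    unfolding B_def by simp
  ultimately have "(ssm_topple p m n)\<^sup>*\<^sup>* (add_top i (fired_config m n E Q)) (fired_config m n E (insert i Q))"
    by (metis r_into_rtranclp rtranclp.rtrancl_into_rtrancl)
  then show ?thesis
    unfolding chain_step_def using stable_fired_config assms by (metis insert_subset)
qed

lemma chain_steps_fire_tops:
  assumes "0 < p" and "p < 1" and "1 \<le> n" and "E \<subseteq> {1..m} \<times> {1..n}" and "Q \<subseteq> {1..m}"
  shows "(chain_step p m n)\<^sup>*\<^sup>* (fired_config m n E {}) (fired_config m n E Q)"
proof -
  have "finite Q" using assms(5) finite_subset by blast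
  then show ?thesis using assms(5)
  proof (induction Q rule: finite_induct)
    case (insert i Q)
    then show ?case
      using chain_step_fire_top[OF assms(1-4)] by (simp add: rtranclp.rtrancl_into_rtrancl)
  qed simp
qed

lemma stable_indeg_config:
  assumes "E \<subseteq> {1..m} \<times> {1..n}" and "\<forall>i\<in>{1..m}. \<exists>j. (i, j) \<in> E"
  shows "stable m n (indeg_config m n E)"
  unfolding stable_def
proof (intro conjI ballI)
  fix i assume "i \<in> {1..m}"
  moreover have "{j. (i, j) \<in> E} \<subseteq> {1..n}" using assms(1) by auto
  ultimately have "0 < card {j. (i, j) \<in> E}" "card {j. (i, j) \<in> E} \<le> n"
    using assms finite_row_col(1)[OF assms(1)] card_mono[of "{1..n}" "{j. (i, j) \<in> E}"]
    by (auto simp: card_gt_0_iff)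
  then show "fst (indeg_config m n E) i < n" using \<open>i \<in> {1..m}\<close> unfolding indeg_config_def by simp
next
  fix j assume "j \<in> {1..n}"
  have "card {i. (i, j) \<in> E} \<le> card {1..m}" using assms(1) by (intro card_mono) auto
  then show "snd (indeg_config m n E) j < m + 1" unfolding indeg_config_def by simp
qed

lemma indeg_config_eq_fired_config_return:
  assumes "1 \<le> n" and "E \<subseteq> {1..m} \<times> {1..n}"
  defines "T \<equiv> {i\<in>{1..m}. (i, n) \<notin> E}"
  shows "indeg_config m n E =
    (\<lambda>i. fst (fired_config m n E {1..m}) i + (if i \<in> T then 1 else 0),
     (snd (fired_config m n E {1..m}))(n := m - card T))"
    (is "_ = ?rhs")
proof (rule prod_eqI)
  show "fst (indeg_config m n E) = fst ?rhs"
  proof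
    fix i
    show "fst (indeg_config m n E) i = fst ?rhs i"
    proof (cases "i \<in> {1..m}")
      case True
      have "card (insert n {j. (i, j) \<in> E}) \<le> n"
        using assms(1,2) card_mono[of "{1..n}" "insert n {j. (i, j) \<in> E}"] by auto
      then show ?thesis
        using True finite_row_col(1)[OF assms(2)] unfolding fired_config_def indeg_config_def T_def
        by (cases "(i, n) \<in> E") (auto simp: insert_absorb)
    qed (auto simp: fired_config_def indeg_config_def T_def)
  qed
  show "snd (indeg_config m n E) = snd ?rhs"
  proof
    fix j
    show "snd (indeg_config m n E) j = snd ?rhs j"
    proof (cases "j = n")
      case True
      have "{i. (i, n) \<in> E} = {1..m} - T" using assms(2) unfolding T_def by auto
      moreover have "T \<subseteq> {1..m}" and "finite T" unfolding T_def by auto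
      ultimately have "card {i. (i, n) \<in> E} = m - card T" by (simp add: card_Diff_subset)
      then show ?thesis using True assms(1) unfolding indeg_config_def by simp
    next
      case False
      have "{i\<in>{1..m}. (i, j) \<in> E} = {i. (i, j) \<in> E}" using assms(2) by auto
      moreover have "j \<in> {1..n-1} \<longleftrightarrow> j \<in> {1..n}" using False by auto
      ultimately show ?thesis using False unfolding fired_config_def indeg_config_def by simp
    qed
  qed
qed

text \<open>Finally a grain added at v^b_n makes it send one grain to the sink and one back to
  each top i with (i, n) \<notin> E, undoing the grain that top sent to v^b_n when firing.\<close>

lemma chain_step_fired_indeg_config:
  assumes "0 < p" and "p < 1" and "1 \<le> n" and "E \<subseteq> {1..m} \<times> {1..n}"
    and "\<forall>i\<in>{1..m}. \<exists>j. (i, j) \<in> E"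
  shows "chain_step p m n (fired_config m n E {1..m}) (indeg_config m n E)"
proof -
  obtain ct cb where F: "fired_config m n E {1..m} = (ct, cb)" by fastforce
  define T where "T = {i\<in>{1..m}. (i, n) \<notin> E}"
  have "cb n = m" using F assms(3) unfolding fired_config_def by (auto simp: prod_eq_iff)
  then have "add_bot n (fired_config m n E {1..m}) = (ct, cb(n := m + 1))"
    unfolding F add_bot_def by simp
  moreover have "ssm_topple p m n (ct, cb(n := m + 1)) (indeg_config m n E)"
  proof (rule ssm_topple_botI[where S = "insert 0 T"])
    have "0 \<notin> T" and "finite T" unfolding T_def by auto
    moreover have "indeg_config m n E = (\<lambda>i. ct i + (if i \<in> T then 1 else 0), cb(n := m - card T))"
      using indeg_config_eq_fired_config_return[OF assms(3,4)] F unfolding T_def by simp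
    ultimately show "indeg_config m n E = (\<lambda>i. ct i + (if i \<in> insert 0 T \<and> i \<noteq> 0 then 1 else 0),
        (cb(n := m + 1))(n := (cb(n := m + 1)) n - card (insert 0 T)))"
      by (auto simp: fun_eq_iff)
  qed (use assms in \<open>auto simp: T_def\<close>)
  ultimately have "(ssm_topple p m n)\<^sup>*\<^sup>* (add_bot n (fired_config m n E {1..m})) (indeg_config m n E)"
    by simp
  then show ?thesis
    unfolding chain_step_def
    using stable_fired_config[OF assms(3) _ assms(4)] stable_indeg_config[OF assms(4,5)] assms(3)
    by auto
qed

lemma chain_steps_max_stable_indeg_config:
  assumes "0 < p" and "p < 1" and "1 \<le> n" and "E \<subseteq> {1..m} \<times> {1..n}"
    and "\<forall>i\<in>{1..m}. \<exists>j. (i, j) \<in> E"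
  shows "(chain_step p m n)\<^sup>*\<^sup>* (max_stable m n) (indeg_config m n E)"
proof -
  have "(chain_step p m n)\<^sup>*\<^sup>* (max_stable m n) (fired_config m n E {})"
    using chain_steps_max_stable_emptied[OF assms(1-3) subset_refl, where m = m]
    unfolding emptied_config_eq_fired_config[OF assms(3), where E = E] .
  also have "(chain_step p m n)\<^sup>*\<^sup>* \<dots> (fired_config m n E {1..m})"
    using chain_steps_fire_tops[OF assms(1-4)] by simp
  also have "chain_step p m n \<dots> (indeg_config m n E)"
    using chain_step_fired_indeg_config[OF assms] .
  finally show ?thesis .
qed

section \<open>Recurrence\<close>

lemma stable_chain_steps:
  assumes "(chain_step p m n)\<^sup>*\<^sup>* c d" and "stable m n c"
  shows "stable m n d"
  using assms by (induction rule: rtranclp_induct) (auto simp: chain_step_def)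

lemma stoch_recurrent_iff_reachable_from_max_stable:
  assumes "1 \<le> n" and "stable m n c" and "config_wf m n c"
  shows "stoch_recurrent p m n c \<longleftrightarrow> (chain_step p m n)\<^sup>*\<^sup>* (max_stable m n) c"
proof
  assume "stoch_recurrent p m n c"
  then show "(chain_step p m n)\<^sup>*\<^sup>* (max_stable m n) c"
    using chain_steps_to_max_stable[OF assms] unfolding stoch_recurrent_def by blast
next
  assume from_max: "(chain_step p m n)\<^sup>*\<^sup>* (max_stable m n) c"
  have "(chain_step p m n)\<^sup>*\<^sup>* d c" if "(chain_step p m n)\<^sup>*\<^sup>* c d" for d
  proof -
    have "stable m n d" and "config_wf m n d"
      using stable_chain_steps config_wf_chain_steps that assms(2,3) by blast+
    then show ?thesis
      using chain_steps_to_max_stable[OF assms(1)] from_max by (meson rtranclp_trans)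
  qed
  then show "stoch_recurrent p m n c" using assms(2) unfolding stoch_recurrent_def by blast
qed

lemma ex_dominated_orientation_if_reachable_from_max_stable:
  assumes "(chain_step p m n)\<^sup>*\<^sup>* (max_stable m n) c"
  shows "\<exists>E. dominates_orientation m n c E"
proof -
  have "{j. (i, j) \<in> {1..m} \<times> {1..n}} = {1..n}" if "i \<in> {1..m}" for i
    using that by auto
  moreover have "{i. (i, j) \<in> {1..m} \<times> {1..n}} = {1..m}" if "j \<in> {1..n}" for j
    using that by auto
  ultimately have "dominates_orientation m n (max_stable m n) ({1..m} \<times> {1..n})"
    unfolding dominates_orientation_iff max_stable_def by simp
  with assms show ?thesis by (rule ex_dominated_orientation_chain_steps)
qed

lemma reachable_from_max_stable_if_dominates_orientation:
  assumes "0 < p" and "p < 1" and "1 \<le> n" and "stable m n c" and "config_wf m n c"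
    and "dominates_orientation m n c E"
  shows "(chain_step p m n)\<^sup>*\<^sup>* (max_stable m n) c"
proof -
  have E: "E \<subseteq> {1..m} \<times> {1..n}" using assms(6) unfolding dominates_orientation_def by blast
  have rows_nonempty: "\<forall>i\<in>{1..m}. \<exists>j. (i, j) \<in> E"
  proof
    fix i assume "i \<in> {1..m}"
    have "n - card {j. (i, j) \<in> E} < n"
      using assms(4,6) \<open>i \<in> {1..m}\<close> unfolding dominates_orientation_iff stable_def
      by (meson le_less_trans)
    then show "\<exists>j. (i, j) \<in> E" by (metis card.empty diff_zero empty_Collect_eq less_irrefl)
  qed
  have "(chain_step p m n)\<^sup>*\<^sup>* (max_stable m n) (indeg_config m n E)"
    by (rule chain_steps_max_stable_indeg_config[OF assms(1-3) E rows_nonempty])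
  also have "(chain_step p m n)\<^sup>*\<^sup>* (indeg_config m n E) c"
  proof (rule chain_steps_if_le[OF _ assms(4) _ assms(5)])
    show "stable m n (indeg_config m n E)" using stable_indeg_config[OF E rows_nonempty] .
    show "config_wf m n (indeg_config m n E)" unfolding config_wf_def indeg_config_def by auto
    show "indeg_config m n E \<le> c" using assms(6) unfolding dominates_orientation_def by blast
  qed
  finally show ?thesis .
qed

theorem theorem2p2:
  fixes m n :: nat and p :: real and c :: config
  assumes "n \<ge> 1" and "0 < p" and "p < 1"
    and "config_wf m n c" and "stable m n c"
  shows "(stoch_recurrent p m n c \<longleftrightarrow>
           (\<forall>j\<in>{1..n}. sum_list (take j (sorted_bottom n c)) \<ge> (\<Sum>l=1..j. kcount m c l)))
       \<and> (stoch_recurrent p m n c \<longrightarrow>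
           level m n c = int (\<Sum>j=1..n. snd c j) - int (\<Sum>l=1..n. kcount m c l))"
proof (intro conjI impI)
  have "stoch_recurrent p m n c \<longleftrightarrow> (chain_step p m n)\<^sup>*\<^sup>* (max_stable m n) c"
    using stoch_recurrent_iff_reachable_from_max_stable assms(1,4,5) by blast
  also have "\<dots> \<longleftrightarrow> (\<exists>E. dominates_orientation m n c E)"
    using ex_dominated_orientation_if_reachable_from_max_stable
      reachable_from_max_stable_if_dominates_orientation assms by blast
  also have "\<dots> \<longleftrightarrow> bottom_sum_condition m n c"
    by (rule ex_dominated_orientation_iff_bottom_sum_condition)
  also have "\<dots> \<longleftrightarrow> (\<forall>j\<in>{1..n}. (\<Sum>l=1..j. kcount m c l) \<le> sum_list (take j (sorted_bottom n c)))"
    by (rule sorted_prefix_condition_iff_bottom_sum_condition[symmetric])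
  finally show "stoch_recurrent p m n c \<longleftrightarrow>
      (\<forall>j\<in>{1..n}. sum_list (take j (sorted_bottom n c)) \<ge> (\<Sum>l=1..j. kcount m c l))" .
  show "level m n c = int (\<Sum>j=1..n. snd c j) - int (\<Sum>l=1..n. kcount m c l)"
    using level_eq_sum_kcount[OF assms(5)] .
qed

end
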